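(* Let $A$ be a complex $r$-matrix of order $n_1\times\cdots\times n_r$, with slices $A^{(j)}_t$. Then \[ \|A\|_r^r\leq\min_{k\in[r]}\ \max_{s\in[n_k]}\ \sum\Big\{|a_{i_1,\ldots,i_r}|\prod_{j\in[r]\setminus\{k\}}|A^{(j)}_{i_j}|_1 \ :\ i_k=s,\ i_j\in[n_j]\text{ for }j\neq k\Big\}. \]
   Context: An $r$-matrix of order $n_1\times\cdots\times n_r$ is a function on $[n_1]\times\cdots\times[n_r]$ with values $a_{i_1,\ldots,i_r}$. For $j\in[r]$ and $t\in[n_j]$, the slice $A^{(j)}_t$ is the $(r-1)$-matrix obtained by fixing $i_j=t$, and $|A^{(j)}_t|_1$ is the sum of the absolute values of its entries. The spectral $r$-norm is $\|A\|_r=\max\{|\sum a_{i_1,\ldots,i_r}\overline{x^{(1)}_{i_1}}\cdots\overline{x^{(r)}_{i_r}}|:\mathbf{x}^{(k)}\in\mathbb{C}^{n_k},\ |\mathbf{x}^{(k)}|_r=1\ \forall k\}$. *)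

theory Defs
  imports "HOL-Analysis.Analysis"
begin

text \<open>An r-matrix of order n_1 x ... x n_r is modelled by r :: nat, the order
  n :: nat \<Rightarrow> nat (n j is the j-th dimension, j < r, 0-based), and
  A :: (nat \<Rightarrow> nat) \<Rightarrow> complex evaluated on multi-indices in rmat_idx r n.\<close>

definition rmat_idx :: "nat \<Rightarrow> (nat \<Rightarrow> nat) \<Rightarrow> (nat \<Rightarrow> nat) set" where
  "rmat_idx r n = PiE {..<r} (\<lambda>j. {..<n j})"

definition slice_norm1 ::
  "((nat \<Rightarrow> nat) \<Rightarrow> complex) \<Rightarrow> nat \<Rightarrow> (nat \<Rightarrow> nat) \<Rightarrow> nat \<Rightarrow> nat \<Rightarrow> real" where
  "slice_norm1 A r n j t = (\<Sum>i\<in>{i \<in> rmat_idx r n. i j = t}. cmod (A i))"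

definition lp_norm :: "real \<Rightarrow> (nat \<Rightarrow> complex) \<Rightarrow> nat \<Rightarrow> real" where
  "lp_norm p v m = (\<Sum>i<m. cmod (v i) powr p) powr (1 / p)"

definition rmat_form ::
  "((nat \<Rightarrow> nat) \<Rightarrow> complex) \<Rightarrow> nat \<Rightarrow> (nat \<Rightarrow> nat) \<Rightarrow> (nat \<Rightarrow> nat \<Rightarrow> complex) \<Rightarrow> complex" where
  "rmat_form A r n x = (\<Sum>i\<in>rmat_idx r n. A i * (\<Prod>k<r. cnj (x k (i k))))"

text \<open>Spectral r-norm: the maximum (= supremum, attained by compactness) of
  |A(x^(1),...,x^(r))| over vectors with |x^(k)|_r = 1.\<close>
definition spectral_rnorm ::
  "((nat \<Rightarrow> nat) \<Rightarrow> complex) \<Rightarrow> nat \<Rightarrow> (nat \<Rightarrow> nat) \<Rightarrow> real" where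
  "spectral_rnorm A r n =
     Sup {cmod (rmat_form A r n x) | x. \<forall>k<r. lp_norm (real r) (x k) (n k) = 1}"

end

theory Submission
  imports Defs
begin

text \<open>Fix a direction k and unit vectors y_j = |x^(j)| with sum_t y_j(t)^r = 1.
  By the triangle inequality it suffices to bound (sum_i w_i prod_j y_j(i_j))^r with
  w_i = |a_i|. Writing each term w_i prod_j y_j(i_j) as the r-th root of M prod_j b_ij,
  where M is the maximum over s of the k-th slice bound, AM-GM bounds it by
  M^(1/r) times the mean of the b_ij. The b_ij carry y_j(i_j)^r times a weight, namely
  w_i / |A^(j)_(i_j)|_1 for j \<noteq> k and w_i prod_(l\<noteq>k) |A^(l)_(i_l)|_1 / M for j = k,
  and these weights sum to at most 1 over each slice, so each column sum sum_i b_ij is at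
  most sum_t y_j(t)^r = 1.\<close>

lemma finite_rmat_idx: "finite (rmat_idx r n)"
  unfolding rmat_idx_def by (intro finite_PiE) auto

lemma rmat_idx_less: "i \<in> rmat_idx r n \<Longrightarrow> j < r \<Longrightarrow> i j < n j"
  unfolding rmat_idx_def by (auto simp: PiE_def Pi_def)

lemma sum_rmat_idx_by_slices:
  assumes "j < r"
  shows "(\<Sum>i\<in>rmat_idx r n. h i) = (\<Sum>t<n j. \<Sum>i\<in>{i \<in> rmat_idx r n. i j = t}. h i)"
  by (rule sum.group[symmetric]) (use assms in \<open>auto simp: finite_rmat_idx rmat_idx_less\<close>)

lemma power_powr_inverse:
  fixes Y :: real
  assumes "0 < r" "0 \<le> Y"
  shows "(Y ^ r) powr (1 / real r) = Y"
  using assms by (cases "Y = 0") (simp_all add: powr_realpow[symmetric] powr_powr)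

lemma root_prod_le_mean:
  fixes X M :: real and b :: "nat \<Rightarrow> real"
  assumes "0 < r" "0 < M" "0 \<le> X" "\<And>j. 0 \<le> b j" "X ^ r = M * (\<Prod>j<r. b j)"
  shows "X \<le> root r M * ((\<Sum>j<r. b j) / r)"
proof -
  have "(\<Prod>j<r. b j) powr (1 / real (card {..<r})) \<le> (\<Sum>j<r. b j / card {..<r})"
    using assms by (intro arith_geom_mean) auto
  moreover have "(\<Prod>j<r. b j) powr (1 / real r) = X / root r M"
  proof -
    have "(\<Prod>j<r. b j) = (X / root r M) ^ r"
      using assms by (simp add: power_divide real_root_pow_pos2)
    moreover have "0 \<le> X / root r M" using assms by simp
    ultimately show ?thesis using assms(1) by (simp add: power_powr_inverse)
  qed
  ultimately show ?thesis
    using assms(1,2) by (simp add: sum_divide_distrib[symmetric] divide_le_eq mult.commute)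
qed

definition slice_sum :: "((nat \<Rightarrow> nat) \<Rightarrow> real) \<Rightarrow> nat \<Rightarrow> (nat \<Rightarrow> nat) \<Rightarrow> nat \<Rightarrow> nat \<Rightarrow> real"
  where "slice_sum w r n j t = (\<Sum>i\<in>{i \<in> rmat_idx r n. i j = t}. w i)"

definition slice_bound :: "((nat \<Rightarrow> nat) \<Rightarrow> real) \<Rightarrow> nat \<Rightarrow> (nat \<Rightarrow> nat) \<Rightarrow> nat \<Rightarrow> nat \<Rightarrow> real"
  where "slice_bound w r n k s = (\<Sum>i\<in>{i \<in> rmat_idx r n. i k = s}.
           w i * (\<Prod>j\<in>{..<r} - {k}. slice_sum w r n j (i j)))"

lemma slice_sum_nonneg: "(\<And>i. 0 \<le> w i) \<Longrightarrow> 0 \<le> slice_sum w r n j t"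
  unfolding slice_sum_def by (simp add: sum_nonneg)

lemma le_slice_sum:
  assumes "\<And>i. 0 \<le> w i" "i \<in> rmat_idx r n"
  shows "w i \<le> slice_sum w r n j (i j)"
  unfolding slice_sum_def using assms by (intro member_le_sum) (auto simp: finite_rmat_idx)

lemma slice_bound_nonneg: "(\<And>i. 0 \<le> w i) \<Longrightarrow> 0 \<le> slice_bound w r n k s"
  unfolding slice_bound_def by (simp add: sum_nonneg prod_nonneg slice_sum_nonneg)

lemma sum_weighted_prod_power_le_pos:
  fixes w :: "(nat \<Rightarrow> nat) \<Rightarrow> real" and y :: "nat \<Rightarrow> nat \<Rightarrow> real"
  assumes k: "k < r" and w: "\<And>i. 0 \<le> w i" and y: "\<And>j t. 0 \<le> y j t"
    and y_norm: "\<And>j. j < r \<Longrightarrow> (\<Sum>t<n j. y j t ^ r) = 1"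
    and M: "0 < M" "\<And>s. s < n k \<Longrightarrow> slice_bound w r n k s \<le> M"
  shows "(\<Sum>i\<in>rmat_idx r n. w i * (\<Prod>j<r. y j (i j))) ^ r \<le> M"
proof -
  define I where "I = rmat_idx r n"
  define S where "S = slice_sum w r n"
  define P where "P i = (\<Prod>j\<in>{..<r} - {k}. S j (i j))" for i
  define d where "d i j = (if j = k then P i / M else inverse (S j (i j)))" for i j
  define b where "b i j = w i * y j (i j) ^ r * d i j" for i j
  have r: "0 < r" using k by simp
  have S_nonneg: "0 \<le> S j t" for j t unfolding S_def using w by (rule slice_sum_nonneg)
  have d_nonneg: "0 \<le> d i j" for i j
    unfolding d_def P_def using M S_nonneg by (simp add: prod_nonneg)
  have mean: "w i * (\<Prod>j<r. y j (i j)) \<le> root r M * ((\<Sum>j<r. b i j) / r)" if "i \<in> I" for i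
  proof (rule root_prod_le_mean)
    have "M * (\<Prod>j<r. d i j) = 1" if "0 < w i"
    proof -
      have S_pos: "0 < S j (i j)" for j
        using le_slice_sum[of w i r n j] w \<open>i \<in> I\<close> that by (simp add: S_def I_def)
      have "(\<Prod>j<r. d i j) = d i k * (\<Prod>j\<in>{..<r} - {k}. d i j)"
        using k by (simp add: prod.remove)
      also have "\<dots> = P i / M * inverse (P i)"
        unfolding P_def d_def using prod_inversef[of "\<lambda>j. S j (i j)"] by (simp add: comp_def)
      moreover have "0 < P i" unfolding P_def using S_pos by (simp add: prod_pos)
      ultimately show ?thesis using M(1) by simp
    qed
    moreover have "(w i * (\<Prod>j<r. y j (i j))) ^ r = (\<Prod>j<r. w i * y j (i j) ^ r)"
      by (simp add: prod.distrib power_mult_distrib prod_power_distrib)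
    ultimately show "(w i * (\<Prod>j<r. y j (i j))) ^ r = M * (\<Prod>j<r. b i j)"
      using w[of i] r by (cases "w i = 0") (simp_all add: b_def prod.distrib)
  qed (use r M w y d_nonneg in \<open>auto simp: b_def prod_nonneg\<close>)
  have slice_weight: "(\<Sum>i\<in>{i \<in> I. i j = t}. w i * d i j) \<le> 1" if "j < r" "t < n j" for j t
  proof (cases "j = k")
    case True
    have "(\<Sum>i\<in>{i \<in> I. i j = t}. w i * d i j) = slice_bound w r n k t / M"
      unfolding True slice_bound_def I_def S_def d_def P_def
      by (simp add: sum_divide_distrib)
    then show ?thesis using M that True by simp
  next
    case False
    then have "(\<Sum>i\<in>{i \<in> I. i j = t}. w i * d i j) = S j t * inverse (S j t)"
      unfolding S_def slice_sum_def I_def d_def by (simp add: sum_distrib_right)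
    then show ?thesis by (simp add: field_simps)
  qed
  have column: "(\<Sum>i\<in>I. b i j) \<le> 1" if "j < r" for j
  proof -
    have "(\<Sum>i\<in>I. b i j) = (\<Sum>t<n j. y j t ^ r * (\<Sum>i\<in>{i \<in> I. i j = t}. w i * d i j))"
      unfolding I_def sum_rmat_idx_by_slices[OF that]
      by (intro sum.cong refl) (auto simp: b_def sum_distrib_left mult_ac)
    also have "\<dots> \<le> (\<Sum>t<n j. y j t ^ r)"
      using slice_weight that y w d_nonneg by (intro sum_mono mult_right_le_one_le sum_nonneg) auto
    finally show ?thesis using y_norm that by simp
  qed
  have "(\<Sum>i\<in>I. w i * (\<Prod>j<r. y j (i j))) \<le> (\<Sum>i\<in>I. root r M * ((\<Sum>j<r. b i j) / r))"
    using mean by (rule sum_mono)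
  also have "\<dots> = root r M / r * (\<Sum>j<r. \<Sum>i\<in>I. b i j)"
    by (simp add: sum_distrib_left sum_divide_distrib[symmetric] sum.swap[of _ I])
  also have "\<dots> \<le> root r M / r * (\<Sum>j<r. 1)"
    using column M r by (intro mult_left_mono sum_mono) auto
  also have "\<dots> = root r M" using r by simp
  finally have "(\<Sum>i\<in>I. w i * (\<Prod>j<r. y j (i j))) ^ r \<le> root r M ^ r"
    using w y by (intro power_mono) (auto intro!: sum_nonneg mult_nonneg_nonneg prod_nonneg)
  then show ?thesis using M r by (simp add: I_def real_root_pow_pos2)
qed

lemma sum_weighted_prod_power_le_max_slice_bound:
  fixes w :: "(nat \<Rightarrow> nat) \<Rightarrow> real" and y :: "nat \<Rightarrow> nat \<Rightarrow> real"
  assumes k: "k < r" and w: "\<And>i. 0 \<le> w i" and y: "\<And>j t. 0 \<le> y j t"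
    and y_norm: "\<And>j. j < r \<Longrightarrow> (\<Sum>t<n j. y j t ^ r) = 1"
  shows "(\<Sum>i\<in>rmat_idx r n. w i * (\<Prod>j<r. y j (i j))) ^ r
           \<le> Max (slice_bound w r n k ` {..<n k})"
  \<comment> \<open>approaching M from above avoids the degenerate case M = 0\<close>
proof (rule field_le_epsilon)
  fix e :: real
  assume "0 < e"
  have "0 < n k" using y_norm[OF k] by (cases "n k") auto
  then have "0 \<le> Max (slice_bound w r n k ` {..<n k})"
    using slice_bound_nonneg[OF w] by (intro Max_ge_iff[THEN iffD2]) auto
  then show "(\<Sum>i\<in>rmat_idx r n. w i * (\<Prod>j<r. y j (i j))) ^ r
               \<le> Max (slice_bound w r n k ` {..<n k}) + e"
    using \<open>0 < e\<close>
    by (intro sum_weighted_prod_power_le_pos[OF k w y y_norm]) (auto intro: add_increasing2)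
qed

lemma sum_power_eq_1_if_lp_norm_eq_1:
  assumes "lp_norm (real r) v m = 1" "0 < r"
  shows "(\<Sum>t<m. cmod (v t) ^ r) = 1"
proof -
  define T where "T = (\<Sum>t<m. cmod (v t) ^ r)"
  have "cmod (v t) powr real r = cmod (v t) ^ r" for t
    using assms(2) by (cases "v t = 0") (simp_all add: powr_realpow)
  then have "T powr (1 / real r) = 1"
    using assms(1) by (simp add: lp_norm_def T_def)
  moreover have "T = (T powr (1 / real r)) powr real r"
    using assms(2) by (simp add: powr_powr T_def sum_nonneg)
  ultimately show ?thesis by (simp add: T_def)
qed

lemma lp_norm_unit_vector:
  assumes "0 < m" "0 < p"
  shows "lp_norm p (\<lambda>t. if t = 0 then 1 else 0) m = 1"
proof -
  have "cmod (if t = 0 then 1 else 0) powr p = (if t = 0 then 1 else 0)" for t :: nat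
    by simp
  then show ?thesis using assms by (simp add: lp_norm_def)
qed

lemma norm_rmat_form_le:
  "cmod (rmat_form A r n x) \<le> (\<Sum>i\<in>rmat_idx r n. cmod (A i) * (\<Prod>j<r. cmod (x j (i j))))"
  unfolding rmat_form_def
  by (rule order_trans[OF norm_sum]) (simp add: norm_mult prod_norm[symmetric])

lemma cSup_power_le:
  fixes S :: "real set"
  assumes "S \<noteq> {}" "0 < r" "\<And>s. s \<in> S \<Longrightarrow> 0 \<le> s \<and> s ^ r \<le> m"
  shows "Sup S ^ r \<le> m"
proof -
  obtain s where "s \<in> S" using assms(1) by blast
  then have m: "0 \<le> m" using assms(3) by (meson order_trans zero_le_power)
  have le_root: "s \<le> root r m" if "s \<in> S" for s
    using assms(3)[OF that] assms(2) real_root_le_mono[of r "s ^ r" m]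
    by (simp add: real_root_power_cancel)
  have "Sup S \<le> root r m" using assms(1) le_root by (rule cSup_least)
  moreover have "0 \<le> Sup S"
    using \<open>s \<in> S\<close> assms(3) le_root by (meson bdd_aboveI cSup_upper order_trans)
  ultimately have "Sup S ^ r \<le> root r m ^ r" by (rule power_mono)
  then show ?thesis using m assms(2) by (simp add: real_root_pow_pos2)
qed

lemma norm_rmat_form_power_le_max_slice_bound:
  assumes "k < r" and x: "\<forall>j<r. lp_norm (real r) (x j) (n j) = 1"
  shows "cmod (rmat_form A r n x) ^ r \<le> Max (slice_bound (\<lambda>i. cmod (A i)) r n k ` {..<n k})"
proof -
  have "cmod (rmat_form A r n x) ^ r
          \<le> (\<Sum>i\<in>rmat_idx r n. cmod (A i) * (\<Prod>j<r. cmod (x j (i j)))) ^ r"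
    by (intro power_mono norm_rmat_form_le) simp
  also have "\<dots> \<le> Max (slice_bound (\<lambda>i. cmod (A i)) r n k ` {..<n k})"
    using assms by (intro sum_weighted_prod_power_le_max_slice_bound)
      (auto intro: sum_power_eq_1_if_lp_norm_eq_1)
  finally show ?thesis .
qed

theorem theorem17:
  fixes A :: "(nat \<Rightarrow> nat) \<Rightarrow> complex" and r :: nat and n :: "nat \<Rightarrow> nat"
  assumes "r \<ge> 1" and "\<forall>j<r. n j \<ge> 1"
  shows "spectral_rnorm A r n ^ r \<le>
    Min ((\<lambda>k. Max ((\<lambda>s. \<Sum>i\<in>{i \<in> rmat_idx r n. i k = s}.
                 cmod (A i) * (\<Prod>j\<in>{..<r} - {k}. slice_norm1 A r n j (i j))) ` {..<n k}))
         ` {..<r})"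
  (is "_ \<le> Min (?bound ` _)")
proof -
  have r: "0 < r" using assms(1) by simp
  have bound_eq: "?bound k = Max (slice_bound (\<lambda>i. cmod (A i)) r n k ` {..<n k})" for k
    by (simp add: slice_bound_def slice_sum_def slice_norm1_def)
  have "cmod (rmat_form A r n x) ^ r \<le> Min (?bound ` {..<r})"
    if "\<forall>k<r. lp_norm (real r) (x k) (n k) = 1" for x
    using r norm_rmat_form_power_le_max_slice_bound[OF _ that] by (auto simp: bound_eq intro!: Min.boundedI)
  moreover have "\<forall>k<r. lp_norm (real r) (\<lambda>t. if t = 0 then 1 else 0) (n k) = 1"
    using assms r by (auto intro!: lp_norm_unit_vector)
  ultimately show ?thesis
    unfolding spectral_rnorm_def by (intro cSup_power_le r) auto
qed

end
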